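(* Assume $\theta_i<1$ for all $i$ and $\theta_j>0$ for some $j$, and let $\zeta=n\theta_{\mathrm{ave}}-\theta_{\min}$. If $\theta_{\max}<\dfrac{n}{n+2(1+\zeta)}$, then for every $x(0)\in\Delta_n$ the trajectory of system (A) converges exponentially fast to the unique fixed point $x^*$ of $F$ in $\Delta_n$.
   Context: Let $n\ge 2$, $\mathbf 1_n$ the all-ones vector, $I_n$ the identity matrix, $\Delta_n=\{x\in\mathbb R^n: x\ge 0,\ \mathbf 1_n^Tx=1\}$. Let $C\in\mathbb R^{n\times n}$ be a nonnegative row-stochastic matrix with zero diagonal, $\theta=(\theta_1,\dots,\theta_n)\in[0,1]^n$, $\Theta=\mathrm{diag}(\theta)$, and for $x\in\mathbb R^n$, $W(x)=\mathrm{diag}(x)+(I_n-\mathrm{diag}(x))C$. Let $\theta_{\min}=\min_j\theta_j$, $\theta_{\mathrm{ave}}=\frac1n\sum_j\theta_j$, $\theta_{\max}=\max_j\theta_j$. System (A): $x(s+1)=F(x(s))$, $s=0,1,2,\dots$, $x(0)\in\Delta_n$, where $F(x)=(I_n-\Theta)(I_n-W(x)^T\Theta)^{-1}\mathbf 1_n/n$. *)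

theory Defs
  imports "HOL-Analysis.Analysis"
begin

text \<open>Vectors in R^n are modelled as real^'n for a finite index type 'n, n = CARD('n).\<close>

definition diagm :: "real^'n \<Rightarrow> real^'n^'n" where
  "diagm x = (\<chi> i j. if i = j then x $ i else 0)"

definition ones :: "real^'n" where
  "ones = (\<chi> i. 1)"

definition prob_simplex :: "(real^'n) set" where
  "prob_simplex = {x. (\<forall>i. 0 \<le> x $ i) \<and> (\<Sum>i\<in>UNIV. x $ i) = 1}"

definition row_stochastic_zero_diag :: "real^'n^'n \<Rightarrow> bool" where
  "row_stochastic_zero_diag C \<longleftrightarrow>
     (\<forall>i j. 0 \<le> C $ i $ j) \<and> (\<forall>i. (\<Sum>j\<in>UNIV. C $ i $ j) = 1) \<and> (\<forall>i. C $ i $ i = 0)"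

definition Wmat :: "real^'n^'n \<Rightarrow> real^'n \<Rightarrow> real^'n^'n" where
  "Wmat C x = diagm x + (mat 1 - diagm x) ** C"

definition Fmap :: "real^'n^'n \<Rightarrow> real^'n \<Rightarrow> real^'n \<Rightarrow> real^'n" where
  "Fmap C \<theta> x = (mat 1 - diagm \<theta>) *v
      (matrix_inv (mat 1 - transpose (Wmat C x) ** diagm \<theta>) *v ((1 / real CARD('n)) *\<^sub>R ones))"

definition theta_min :: "real^'n \<Rightarrow> real" where
  "theta_min \<theta> = Min (range (\<lambda>j. \<theta> $ j))"

definition theta_max :: "real^'n \<Rightarrow> real" where
  "theta_max \<theta> = Max (range (\<lambda>j. \<theta> $ j))"

definition theta_ave :: "real^'n \<Rightarrow> real" where
  "theta_ave \<theta> = (\<Sum>j\<in>UNIV. \<theta> $ j) / real CARD('n)"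

end

theory Submission
  imports Defs
begin

(*
  Write y(x) = (I - W(x)^T Theta)^-1 (1/n) 1, so that F(x) = (I - Theta) y(x) and
  y = (1/n) 1 + W(x)^T Theta y. On the simplex W(x) is row-stochastic, so for theta < 1 the
  solution y is nonnegative and sum_i (1 - theta_i) y_i = 1: F maps the simplex into itself.
  Multiplying the equation by theta and summing bounds every theta_i y_i by
  K = t (1 - t + sum theta) / (n (1 - t)) with t = theta_max. Since
  W(x) - W(x') = diag(x - x') (I - C), subtracting the equations for x and x' gives
  |F x - F x'|_1 <= 2K |x - x'|_1, and the smallness hypothesis (with theta_min <= theta_max)
  gives 2K < 1. So F is an l1-contraction of the simplex: Brouwer yields a fixed point, the
  contraction its uniqueness and the geometric convergence.
*)

lemma diagm_matrix_mult_entry: "(diagm d ** A) $ i $ j = d $ i * A $ i $ j"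
  by (simp add: diagm_def matrix_matrix_mult_def if_distrib[of "\<lambda>x. x * _"] sum.delta cong: if_cong)

lemma matrix_diagm_mult_entry: "(A ** diagm d) $ i $ j = A $ i $ j * d $ j"
  by (simp add: diagm_def matrix_matrix_mult_def if_distrib[of "\<lambda>x. _ * x"] sum.delta' cong: if_cong)

lemma diagm_mult_vec: "(diagm d *v z) $ i = d $ i * z $ i"
  by (simp add: diagm_def matrix_vector_mult_def if_distrib[of "\<lambda>x. x * _"] sum.delta cong: if_cong)

lemma mat_1_minus_diagm: "mat 1 - diagm x = diagm (ones - x)"
  by (simp add: vec_eq_iff mat_def diagm_def ones_def)

definition row_stochastic :: "real^'n^'n \<Rightarrow> bool" where
  "row_stochastic W \<longleftrightarrow> (\<forall>i j. 0 \<le> W $ i $ j) \<and> (\<forall>i. (\<Sum>j\<in>UNIV. W $ i $ j) = 1)"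

lemma row_stochastic_le_1:
  assumes "row_stochastic W"
  shows "W $ i $ j \<le> 1"
proof -
  have "W $ i $ j \<le> (\<Sum>j\<in>UNIV. W $ i $ j)"
    using assms by (intro member_le_sum) (auto simp: row_stochastic_def)
  thus ?thesis
    using assms by (simp add: row_stochastic_def)
qed

lemma row_stochastic_average_le:
  assumes "row_stochastic W" and "\<forall>i. v $ i \<le> t"
  shows "(\<Sum>i\<in>UNIV. W $ j $ i * v $ i) \<le> t"
proof -
  have "(\<Sum>i\<in>UNIV. W $ j $ i * v $ i) \<le> (\<Sum>i\<in>UNIV. W $ j $ i * t)"
    using assms by (intro sum_mono mult_left_mono) (auto simp: row_stochastic_def)
  also have "\<dots> = (\<Sum>i\<in>UNIV. W $ j $ i) * t"
    by (simp add: sum_distrib_right)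
  also have "\<dots> = t"
    using assms by (simp add: row_stochastic_def)
  finally show ?thesis .
qed

lemma row_stochastic_sum_column_sums:
  assumes "row_stochastic W"
  shows "(\<Sum>i\<in>UNIV. \<Sum>j\<in>UNIV. W $ j $ i * f j) = (\<Sum>j\<in>UNIV. f j)"
proof -
  have "(\<Sum>i\<in>UNIV. \<Sum>j\<in>UNIV. W $ j $ i * f j) = (\<Sum>j\<in>UNIV. (\<Sum>i\<in>UNIV. W $ j $ i) * f j)"
    by (subst sum.swap) (simp add: sum_distrib_right)
  thus ?thesis
    using assms by (simp add: row_stochastic_def)
qed

(* Never give the unfolded definition to the simplifier: y occurs on both sides and rewriting
   loops. Use resolvent_solutionD instead. *)
definition resolvent_solution :: "real^'n^'n \<Rightarrow> real^'n \<Rightarrow> real \<Rightarrow> real^'n \<Rightarrow> bool" where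
  "resolvent_solution W \<theta> b y \<longleftrightarrow> (\<forall>i. y $ i = b + (\<Sum>j\<in>UNIV. W $ j $ i * (\<theta> $ j * y $ j)))"

lemma resolvent_solutionD:
  "resolvent_solution W \<theta> b y \<Longrightarrow> y $ i = b + (\<Sum>j\<in>UNIV. W $ j $ i * (\<theta> $ j * y $ j))"
  unfolding resolvent_solution_def by blast

lemma nonneg_subsolution_eq_0:
  assumes W: "row_stochastic W" and \<theta>: "\<forall>i. 0 \<le> \<theta> $ i \<and> \<theta> $ i < 1"
    and u_nonneg: "\<forall>i. 0 \<le> u $ i"
    and u_sub: "\<forall>i. u $ i \<le> (\<Sum>j\<in>UNIV. W $ j $ i * (\<theta> $ j * u $ j))"
  shows "u = 0"
proof -
  have "(\<Sum>i\<in>UNIV. u $ i) \<le> (\<Sum>i\<in>UNIV. \<Sum>j\<in>UNIV. W $ j $ i * (\<theta> $ j * u $ j))"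
    using u_sub by (intro sum_mono) auto
  also have "\<dots> = (\<Sum>j\<in>UNIV. \<theta> $ j * u $ j)"
    by (rule row_stochastic_sum_column_sums[OF W])
  finally have "(\<Sum>j\<in>UNIV. (1 - \<theta> $ j) * u $ j) \<le> 0"
    by (simp add: left_diff_distrib sum_subtractf)
  moreover have nonneg: "\<forall>j\<in>UNIV. 0 \<le> (1 - \<theta> $ j) * u $ j"
    using \<theta> u_nonneg by (simp add: less_imp_le)
  ultimately have "(\<Sum>j\<in>UNIV. (1 - \<theta> $ j) * u $ j) = 0"
    by (meson order_antisym sum_nonneg)
  hence "(1 - \<theta> $ j) * u $ j = 0" for j
    using nonneg by (simp add: sum_nonneg_eq_0_iff)
  hence "u $ j = 0" for j
    using \<theta> by (metis eq_iff_diff_eq_0 less_irrefl mult_eq_0_iff)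
  thus ?thesis
    by (simp add: vec_eq_iff)
qed

lemma resolvent_solution_nonneg:
  assumes W: "row_stochastic W" and \<theta>: "\<forall>i. 0 \<le> \<theta> $ i \<and> \<theta> $ i < 1"
    and b: "0 \<le> b" and y: "resolvent_solution W \<theta> b y"
  shows "0 \<le> y $ i"
proof -
  define u where "u = (\<chi> i. max (- y $ i) 0)"
  have "u = 0"
  proof (rule nonneg_subsolution_eq_0[OF W \<theta>])
    show "\<forall>i. 0 \<le> u $ i"
      by (simp add: u_def)
    show "\<forall>i. u $ i \<le> (\<Sum>j\<in>UNIV. W $ j $ i * (\<theta> $ j * u $ j))"
    proof
      fix i
      have "- y $ i \<le> (\<Sum>j\<in>UNIV. W $ j $ i * (\<theta> $ j * - y $ j))"
        using resolvent_solutionD[OF y, of i] b by (simp add: sum_negf)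
      also have "\<dots> \<le> (\<Sum>j\<in>UNIV. W $ j $ i * (\<theta> $ j * u $ j))"
        using W \<theta> by (intro sum_mono mult_left_mono) (auto simp: u_def row_stochastic_def)
      finally have "- y $ i \<le> (\<Sum>j\<in>UNIV. W $ j $ i * (\<theta> $ j * u $ j))" .
      moreover have "0 \<le> (\<Sum>j\<in>UNIV. W $ j $ i * (\<theta> $ j * u $ j))"
        using W \<theta> by (intro sum_nonneg mult_nonneg_nonneg) (auto simp: u_def row_stochastic_def)
      ultimately show "u $ i \<le> (\<Sum>j\<in>UNIV. W $ j $ i * (\<theta> $ j * u $ j))"
        by (simp add: u_def)
    qed
  qed
  thus ?thesis
    by (auto simp: u_def vec_eq_iff dest: spec[of _ i])
qed

lemma resolvent_solution_weighted_sum: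
  fixes W :: "real^'n^'n"
  assumes W: "row_stochastic W" and y: "resolvent_solution W \<theta> b y"
  shows "(\<Sum>i\<in>UNIV. (1 - \<theta> $ i) * y $ i) = real CARD('n) * b"
proof -
  have "(\<Sum>i\<in>UNIV. y $ i) = (\<Sum>i\<in>UNIV. b + (\<Sum>j\<in>UNIV. W $ j $ i * (\<theta> $ j * y $ j)))"
    by (intro sum.cong refl resolvent_solutionD[OF y])
  also have "\<dots> = real CARD('n) * b + (\<Sum>j\<in>UNIV. \<theta> $ j * y $ j)"
    by (simp add: sum.distrib row_stochastic_sum_column_sums[OF W])
  finally show ?thesis
    by (simp add: left_diff_distrib sum_subtractf)
qed

lemma resolvent_solution_theta_mass_le:
  assumes W: "row_stochastic W" and \<theta>: "\<forall>i. 0 \<le> \<theta> $ i \<and> \<theta> $ i < 1"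
    and t: "\<forall>i. \<theta> $ i \<le> t" "t < 1" and b: "0 \<le> b" and y: "resolvent_solution W \<theta> b y"
  shows "(\<Sum>j\<in>UNIV. \<theta> $ j * y $ j) \<le> b * (\<Sum>j\<in>UNIV. \<theta> $ j) / (1 - t)"
proof -
  have "(\<Sum>i\<in>UNIV. \<theta> $ i * y $ i)
      = (\<Sum>i\<in>UNIV. b * \<theta> $ i + (\<Sum>j\<in>UNIV. W $ j $ i * \<theta> $ i * (\<theta> $ j * y $ j)))"
  proof (rule sum.cong)
    fix i
    from resolvent_solutionD[OF y, of i] show "\<theta> $ i * y $ i = b * \<theta> $ i + (\<Sum>j\<in>UNIV. W $ j $ i * \<theta> $ i * (\<theta> $ j * y $ j))"
      by (simp add: distrib_left sum_distrib_left mult_ac)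
  qed simp
  also have "\<dots> = b * (\<Sum>i\<in>UNIV. \<theta> $ i) + (\<Sum>j\<in>UNIV. \<Sum>i\<in>UNIV. W $ j $ i * \<theta> $ i * (\<theta> $ j * y $ j))"
    by (simp add: sum.distrib sum_distrib_left) (rule sum.swap)
  also have "\<dots> = b * (\<Sum>i\<in>UNIV. \<theta> $ i) + (\<Sum>j\<in>UNIV. (\<Sum>i\<in>UNIV. W $ j $ i * \<theta> $ i) * (\<theta> $ j * y $ j))"
    by (simp add: sum_distrib_right)
  also have "\<dots> \<le> b * (\<Sum>i\<in>UNIV. \<theta> $ i) + (\<Sum>j\<in>UNIV. t * (\<theta> $ j * y $ j))"
    using resolvent_solution_nonneg[OF W \<theta> b y] \<theta>
    by (intro add_left_mono sum_mono mult_right_mono row_stochastic_average_le[OF W t(1)]) auto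
  also have "\<dots> = b * (\<Sum>i\<in>UNIV. \<theta> $ i) + t * (\<Sum>j\<in>UNIV. \<theta> $ j * y $ j)"
    by (simp add: sum_distrib_left)
  finally have "(\<Sum>j\<in>UNIV. \<theta> $ j * y $ j) * (1 - t) \<le> b * (\<Sum>j\<in>UNIV. \<theta> $ j)"
    by (simp add: algebra_simps)
  thus ?thesis
    using t by (simp add: pos_le_divide_eq)
qed

lemma resolvent_solution_theta_bound:
  assumes W: "row_stochastic W" and \<theta>: "\<forall>i. 0 \<le> \<theta> $ i \<and> \<theta> $ i < 1"
    and t: "\<forall>i. \<theta> $ i \<le> t" "t < 1" and b: "0 \<le> b" and y: "resolvent_solution W \<theta> b y"
  shows "\<theta> $ i * y $ i \<le> b * t * (1 - t + (\<Sum>j\<in>UNIV. \<theta> $ j)) / (1 - t)"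
proof -
  have y_nonneg: "0 \<le> y $ j" for j
    by (rule resolvent_solution_nonneg[OF W \<theta> b y])
  have t_nonneg: "0 \<le> t"
    using \<theta> t(1) by (meson order.trans)
  have "(\<Sum>j\<in>UNIV. W $ j $ i * (\<theta> $ j * y $ j)) \<le> (\<Sum>j\<in>UNIV. \<theta> $ j * y $ j)"
    using \<theta> y_nonneg row_stochastic_le_1[OF W] W
    by (intro sum_mono mult_left_le_one_le) (auto simp: row_stochastic_def)
  hence "y $ i \<le> b + (\<Sum>j\<in>UNIV. \<theta> $ j * y $ j)"
    using resolvent_solutionD[OF y, of i] by linarith
  also have "\<dots> \<le> b + b * (\<Sum>j\<in>UNIV. \<theta> $ j) / (1 - t)"
    using resolvent_solution_theta_mass_le[OF W \<theta> t b y] by simp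
  also have "\<dots> = b * (1 - t + (\<Sum>j\<in>UNIV. \<theta> $ j)) / (1 - t)"
    using t by (simp add: field_simps)
  finally have "\<theta> $ i * y $ i \<le> t * (b * (1 - t + (\<Sum>j\<in>UNIV. \<theta> $ j)) / (1 - t))"
    using \<theta> t t_nonneg y_nonneg by (intro mult_mono) auto
  thus ?thesis
    by (simp add: mult_ac)
qed

lemma resolvent_solution_perturbation:
  assumes W: "row_stochastic W" and C: "row_stochastic C" and \<theta>: "\<forall>i. 0 \<le> \<theta> $ i"
    and y: "resolvent_solution W \<theta> b y" and y': "resolvent_solution W' \<theta> b y'"
    and W_diff: "W - W' = diagm d ** (mat 1 - C)"
  shows "(\<Sum>i\<in>UNIV. (1 - \<theta> $ i) * \<bar>y $ i - y' $ i\<bar>) \<le> 2 * (\<Sum>j\<in>UNIV. \<bar>d $ j * (\<theta> $ j * y' $ j)\<bar>)"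
proof -
  define e where "e j = y $ j - y' $ j" for j
  define v where "v j = d $ j * (\<theta> $ j * y' $ j)" for j
  have e_eq: "e i = (\<Sum>j\<in>UNIV. W $ j $ i * (\<theta> $ j * e j)) + (v i - (\<Sum>j\<in>UNIV. C $ j $ i * v j))" for i
  proof -
    have W_diff_entry: "W $ j $ i - W' $ j $ i = d $ j * ((if j = i then 1 else 0) - C $ j $ i)" for j
      using arg_cong[OF W_diff, of "\<lambda>M. M $ j $ i"] by (simp add: diagm_matrix_mult_entry mat_def)
    have "e i = (\<Sum>j\<in>UNIV. W $ j $ i * (\<theta> $ j * y $ j)) - (\<Sum>j\<in>UNIV. W' $ j $ i * (\<theta> $ j * y' $ j))"
      using resolvent_solutionD[OF y, of i] resolvent_solutionD[OF y', of i] by (simp add: e_def)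
    also have "\<dots> = (\<Sum>j\<in>UNIV. W $ j $ i * (\<theta> $ j * e j) + (W $ j $ i - W' $ j $ i) * (\<theta> $ j * y' $ j))"
      by (simp add: e_def sum_subtractf[symmetric] algebra_simps)
    also have "\<dots> = (\<Sum>j\<in>UNIV. W $ j $ i * (\<theta> $ j * e j) + ((if j = i then v j else 0) - C $ j $ i * v j))"
      by (intro sum.cong) (auto simp: W_diff_entry v_def algebra_simps)
    also have "\<dots> = (\<Sum>j\<in>UNIV. W $ j $ i * (\<theta> $ j * e j)) + (v i - (\<Sum>j\<in>UNIV. C $ j $ i * v j))"
      by (simp add: sum.distrib sum_subtractf)
    finally show ?thesis .
  qed
  have e_bound: "\<bar>e i\<bar> \<le> (\<Sum>j\<in>UNIV. W $ j $ i * (\<theta> $ j * \<bar>e j\<bar>)) + \<bar>v i\<bar> + (\<Sum>j\<in>UNIV. C $ j $ i * \<bar>v j\<bar>)" for i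
  proof -
    have "\<bar>\<Sum>j\<in>UNIV. W $ j $ i * (\<theta> $ j * e j)\<bar> \<le> (\<Sum>j\<in>UNIV. W $ j $ i * (\<theta> $ j * \<bar>e j\<bar>))"
      using W \<theta> by (intro order.trans[OF sum_abs]) (simp add: abs_mult row_stochastic_def)
    moreover have "\<bar>\<Sum>j\<in>UNIV. C $ j $ i * v j\<bar> \<le> (\<Sum>j\<in>UNIV. C $ j $ i * \<bar>v j\<bar>)"
      using C by (intro order.trans[OF sum_abs]) (simp add: abs_mult row_stochastic_def)
    ultimately show ?thesis
      using e_eq[of i] by linarith
  qed
  have "(\<Sum>i\<in>UNIV. \<bar>e i\<bar>)
      \<le> (\<Sum>i\<in>UNIV. (\<Sum>j\<in>UNIV. W $ j $ i * (\<theta> $ j * \<bar>e j\<bar>)) + \<bar>v i\<bar> + (\<Sum>j\<in>UNIV. C $ j $ i * \<bar>v j\<bar>))"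
    using e_bound by (rule sum_mono)
  also have "\<dots> = (\<Sum>j\<in>UNIV. \<theta> $ j * \<bar>e j\<bar>) + 2 * (\<Sum>j\<in>UNIV. \<bar>v j\<bar>)"
    by (simp add: sum.distrib row_stochastic_sum_column_sums[OF W] row_stochastic_sum_column_sums[OF C])
  finally have "(\<Sum>i\<in>UNIV. (1 - \<theta> $ i) * \<bar>e i\<bar>) \<le> 2 * (\<Sum>j\<in>UNIV. \<bar>v j\<bar>)"
    by (simp add: left_diff_distrib sum_subtractf)
  thus ?thesis
    by (simp add: e_def v_def)
qed

definition resolvent_matrix :: "real^'n^'n \<Rightarrow> real^'n \<Rightarrow> real^'n^'n" where
  "resolvent_matrix W \<theta> = mat 1 - transpose W ** diagm \<theta>"

lemma resolvent_matrix_entry: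
  "resolvent_matrix W \<theta> $ i $ j = (if i = j then 1 else 0) - W $ j $ i * \<theta> $ j"
  by (simp add: resolvent_matrix_def matrix_diagm_mult_entry mat_def transpose_def)

lemma resolvent_matrix_mult_vec:
  "(resolvent_matrix W \<theta> *v z) $ i = z $ i - (\<Sum>j\<in>UNIV. W $ j $ i * (\<theta> $ j * z $ j))"
  by (simp add: matrix_vector_mult_def resolvent_matrix_entry algebra_simps sum_subtractf
      if_distrib[of "\<lambda>x. _ * x"] sum.delta cong: if_cong)

lemma resolvent_solution_iff:
  "resolvent_solution W \<theta> b y \<longleftrightarrow> resolvent_matrix W \<theta> *v y = b *\<^sub>R ones"
  unfolding resolvent_solution_def vec_eq_iff
  by (simp add: resolvent_matrix_mult_vec ones_def diff_eq_eq add.commute)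

lemma resolvent_matrix_invertible:
  assumes W: "row_stochastic W" and \<theta>: "\<forall>i. 0 \<le> \<theta> $ i \<and> \<theta> $ i < 1"
  shows "invertible (resolvent_matrix W \<theta>)"
  unfolding invertible_left_inverse matrix_left_invertible_ker
proof (intro allI impI)
  fix z assume z: "resolvent_matrix W \<theta> *v z = 0"
  have "(\<chi> i. \<bar>z $ i\<bar>) = 0"
  proof (rule nonneg_subsolution_eq_0[OF W \<theta>])
    show "\<forall>i. 0 \<le> (\<chi> i. \<bar>z $ i\<bar>) $ i"
      by simp
    show "\<forall>i. (\<chi> i. \<bar>z $ i\<bar>) $ i \<le> (\<Sum>j\<in>UNIV. W $ j $ i * (\<theta> $ j * (\<chi> i. \<bar>z $ i\<bar>) $ j))"
    proof
      fix i
      have "z $ i = (\<Sum>j\<in>UNIV. W $ j $ i * (\<theta> $ j * z $ j))"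
        using arg_cong[OF z, of "\<lambda>v. v $ i"] by (simp add: resolvent_matrix_mult_vec)
      thus "(\<chi> i. \<bar>z $ i\<bar>) $ i \<le> (\<Sum>j\<in>UNIV. W $ j $ i * (\<theta> $ j * (\<chi> i. \<bar>z $ i\<bar>) $ j))"
        using W \<theta> by (auto simp: abs_mult row_stochastic_def intro!: order.trans[OF sum_abs])
    qed
  qed
  thus "z = 0"
    by (simp add: vec_eq_iff)
qed

lemma matrix_inv_right:
  assumes "invertible A"
  shows "A ** matrix_inv A = mat 1"
proof -
  from assms have "A ** matrix_inv A = mat 1 \<and> matrix_inv A ** A = mat 1"
    unfolding invertible_def matrix_inv_def by (rule someI_ex)
  thus ?thesis ..
qed

lemma resolvent_solution_matrix_inv:
  assumes "row_stochastic W" and "\<forall>i. 0 \<le> \<theta> $ i \<and> \<theta> $ i < 1"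
  shows "resolvent_solution W \<theta> b (matrix_inv (resolvent_matrix W \<theta>) *v (b *\<^sub>R ones))"
  unfolding resolvent_solution_iff
  by (simp add: matrix_vector_mul_assoc matrix_inv_right[OF resolvent_matrix_invertible[OF assms]])

lemma prob_simplex_le_1:
  assumes "x \<in> prob_simplex"
  shows "x $ j \<le> 1"
proof -
  have "x $ j \<le> (\<Sum>i\<in>UNIV. x $ i)"
    using assms by (intro member_le_sum) (auto simp: prob_simplex_def)
  thus ?thesis
    using assms by (simp add: prob_simplex_def)
qed

lemma row_stochastic_zero_diag_imp_row_stochastic:
  "row_stochastic_zero_diag C \<Longrightarrow> row_stochastic C"
  by (simp add: row_stochastic_zero_diag_def row_stochastic_def)

lemma Wmat_entry: "Wmat C x $ j $ i = (if j = i then x $ j else 0) + (1 - x $ j) * C $ j $ i"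
  by (simp add: Wmat_def mat_1_minus_diagm diagm_matrix_mult_entry) (simp add: diagm_def ones_def)

lemma row_stochastic_Wmat:
  assumes C: "row_stochastic C" and x: "x \<in> prob_simplex"
  shows "row_stochastic (Wmat C x)"
  unfolding row_stochastic_def
proof (intro conjI allI)
  fix j i
  show "0 \<le> Wmat C x $ j $ i"
    using C x prob_simplex_le_1[OF x, of j] by (auto simp: Wmat_entry row_stochastic_def prob_simplex_def)
  have "(\<Sum>i\<in>UNIV. Wmat C x $ j $ i) = x $ j + (1 - x $ j) * (\<Sum>i\<in>UNIV. C $ j $ i)"
    by (simp add: Wmat_entry sum.distrib sum_distrib_left)
  thus "(\<Sum>i\<in>UNIV. Wmat C x $ j $ i) = 1"
    using C by (simp add: row_stochastic_def)
qed

lemma Wmat_diff: "Wmat C x - Wmat C x' = diagm (x - x') ** (mat 1 - C)"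
  by (simp add: vec_eq_iff Wmat_entry diagm_matrix_mult_entry mat_def algebra_simps)

lemma Fmap_resolvent_representation:
  fixes C :: "real^'n^'n"
  assumes C: "row_stochastic C" and \<theta>: "\<forall>i. 0 \<le> \<theta> $ i \<and> \<theta> $ i < 1" and x: "x \<in> prob_simplex"
  obtains y where "resolvent_solution (Wmat C x) \<theta> (1 / real CARD('n)) y"
    and "\<And>i. Fmap C \<theta> x $ i = (1 - \<theta> $ i) * y $ i"
proof
  let ?y = "matrix_inv (resolvent_matrix (Wmat C x) \<theta>) *v ((1 / real CARD('n)) *\<^sub>R ones)"
  show "resolvent_solution (Wmat C x) \<theta> (1 / real CARD('n)) ?y"
    by (rule resolvent_solution_matrix_inv[OF row_stochastic_Wmat[OF C x] \<theta>])
  show "Fmap C \<theta> x $ i = (1 - \<theta> $ i) * ?y $ i" for i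
    unfolding Fmap_def resolvent_matrix_def[symmetric] mat_1_minus_diagm diagm_mult_vec
    by (simp add: ones_def)
qed

lemma Fmap_in_prob_simplex:
  fixes C :: "real^'n^'n"
  assumes C: "row_stochastic C" and \<theta>: "\<forall>i. 0 \<le> \<theta> $ i \<and> \<theta> $ i < 1" and x: "x \<in> prob_simplex"
  shows "Fmap C \<theta> x \<in> prob_simplex"
proof -
  obtain y where y: "resolvent_solution (Wmat C x) \<theta> (1 / real CARD('n)) y"
    and F: "\<And>i. Fmap C \<theta> x $ i = (1 - \<theta> $ i) * y $ i"
    using Fmap_resolvent_representation[OF C \<theta> x] by blast
  have W: "row_stochastic (Wmat C x)"
    by (rule row_stochastic_Wmat[OF C x])
  have "0 \<le> Fmap C \<theta> x $ i" for i
    using \<theta> resolvent_solution_nonneg[OF W \<theta> _ y] by (simp add: F less_imp_le)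
  moreover have "(\<Sum>i\<in>UNIV. Fmap C \<theta> x $ i) = 1"
    using resolvent_solution_weighted_sum[OF W y] by (simp add: F)
  ultimately show ?thesis
    by (simp add: prob_simplex_def)
qed

definition l1_norm :: "real^'n \<Rightarrow> real" where
  "l1_norm z = (\<Sum>i\<in>UNIV. \<bar>z $ i\<bar>)"

lemma norm_le_l1_norm: "norm z \<le> l1_norm z"
  unfolding l1_norm_def by (rule norm_le_l1_cart)

lemma l1_norm_le_card_norm: "l1_norm (z :: real^'n) \<le> real CARD('n) * norm z"
  unfolding l1_norm_def
  using sum_bounded_above[of UNIV "\<lambda>i. \<bar>z $ i\<bar>" "norm z"] component_le_norm_cart by auto

lemma l1_norm_nonneg: "0 \<le> l1_norm z"
  unfolding l1_norm_def by (simp add: sum_nonneg)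

lemma Fmap_l1_lipschitz:
  fixes C :: "real^'n^'n"
  assumes C: "row_stochastic C" and \<theta>: "\<forall>i. 0 \<le> \<theta> $ i \<and> \<theta> $ i < 1"
    and t: "\<forall>i. \<theta> $ i \<le> t" "t < 1" and x: "x \<in> prob_simplex" and x': "x' \<in> prob_simplex"
  shows "l1_norm (Fmap C \<theta> x - Fmap C \<theta> x')
    \<le> 2 * t * (1 - t + (\<Sum>j\<in>UNIV. \<theta> $ j)) / (real CARD('n) * (1 - t)) * l1_norm (x - x')"
proof -
  define b where "b = 1 / real CARD('n)"
  define K where "K = b * t * (1 - t + (\<Sum>j\<in>UNIV. \<theta> $ j)) / (1 - t)"
  obtain y where y: "resolvent_solution (Wmat C x) \<theta> b y"
    and F: "\<And>i. Fmap C \<theta> x $ i = (1 - \<theta> $ i) * y $ i"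
    unfolding b_def using Fmap_resolvent_representation[OF C \<theta> x] by blast
  obtain y' where y': "resolvent_solution (Wmat C x') \<theta> b y'"
    and F': "\<And>i. Fmap C \<theta> x' $ i = (1 - \<theta> $ i) * y' $ i"
    unfolding b_def using Fmap_resolvent_representation[OF C \<theta> x'] by blast
  have W': "row_stochastic (Wmat C x')"
    by (rule row_stochastic_Wmat[OF C x'])
  have b: "0 \<le> b"
    by (simp add: b_def)
  have "l1_norm (Fmap C \<theta> x - Fmap C \<theta> x') = (\<Sum>i\<in>UNIV. (1 - \<theta> $ i) * \<bar>y $ i - y' $ i\<bar>)"
    using \<theta> by (simp add: l1_norm_def F F' abs_mult less_imp_le flip: right_diff_distrib)
  also have "\<dots> \<le> 2 * (\<Sum>j\<in>UNIV. \<bar>(x - x') $ j * (\<theta> $ j * y' $ j)\<bar>)"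
    using \<theta> by (intro resolvent_solution_perturbation[OF row_stochastic_Wmat[OF C x] C _ y y' Wmat_diff]) auto
  also have "\<dots> \<le> 2 * (\<Sum>j\<in>UNIV. K * \<bar>(x - x') $ j\<bar>)"
  proof -
    have "\<bar>(x - x') $ j * (\<theta> $ j * y' $ j)\<bar> \<le> K * \<bar>(x - x') $ j\<bar>" for j
    proof -
      have "0 \<le> \<theta> $ j * y' $ j"
        using \<theta> resolvent_solution_nonneg[OF W' \<theta> b y', of j] by simp
      hence "\<bar>(x - x') $ j * (\<theta> $ j * y' $ j)\<bar> = \<bar>(x - x') $ j\<bar> * (\<theta> $ j * y' $ j)"
        by (metis abs_mult abs_of_nonneg)
      also have "\<dots> \<le> \<bar>(x - x') $ j\<bar> * K"
        unfolding K_def by (intro mult_left_mono resolvent_solution_theta_bound[OF W' \<theta> t b y']) simp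
      finally show ?thesis
        by (simp add: mult.commute)
    qed
    thus ?thesis
      by (simp add: sum_mono)
  qed
  also have "\<dots> = 2 * K * l1_norm (x - x')"
    by (simp add: l1_norm_def sum_distrib_left mult.assoc)
  also have "2 * K = 2 * t * (1 - t + (\<Sum>j\<in>UNIV. \<theta> $ j)) / (real CARD('n) * (1 - t))"
    by (simp add: K_def b_def)
  finally show ?thesis .
qed

lemma theta_le_theta_max: "\<theta> $ i \<le> theta_max \<theta>"
  unfolding theta_max_def by (rule Max_ge) auto

lemma theta_min_le_theta: "theta_min \<theta> \<le> \<theta> $ i"
  unfolding theta_min_def by (rule Min_le) auto

lemma theta_max_attained: "\<exists>i. theta_max \<theta> = \<theta> $ i"
proof -
  have "theta_max \<theta> \<in> range (\<lambda>j. \<theta> $ j)"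
    unfolding theta_max_def by (rule Max_in) auto
  thus ?thesis
    by auto
qed

lemma theta_max_lt_1:
  assumes "\<forall>i. \<theta> $ i < 1"
  shows "theta_max \<theta> < 1"
  using theta_max_attained[of \<theta>] assms by auto

lemma theta_max_contraction_factor:
  fixes \<theta> :: "real^'n"
  assumes \<theta>: "\<forall>i. 0 \<le> \<theta> $ i \<and> \<theta> $ i < 1"
    and small: "theta_max \<theta> < real CARD('n) /
        (real CARD('n) + 2 * (1 + (real CARD('n) * theta_ave \<theta> - theta_min \<theta>)))"
  defines "\<rho> \<equiv> 2 * theta_max \<theta> * (1 - theta_max \<theta> + (\<Sum>j\<in>UNIV. \<theta> $ j))
      / (real CARD('n) * (1 - theta_max \<theta>))"
  shows "0 \<le> \<rho>" and "\<rho> < 1"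
proof -
  define n where "n = real CARD('n)"
  define t where "t = theta_max \<theta>"
  define T where "T = (\<Sum>j\<in>UNIV. \<theta> $ j)"
  obtain i where i: "t = \<theta> $ i"
    unfolding t_def using theta_max_attained by blast
  have t: "0 \<le> t" "t < 1"
    using \<theta> i by auto
  have "\<theta> $ i \<le> T"
    unfolding T_def using \<theta> by (intro member_le_sum) auto
  hence T: "0 \<le> T"
    using \<theta> by (meson order.trans)
  show "0 \<le> \<rho>"
    unfolding \<rho>_def using t T by (intro divide_nonneg_nonneg mult_nonneg_nonneg) (auto simp: t_def T_def)
  have min_le_t: "theta_min \<theta> \<le> t"
    using theta_min_le_theta i by metis
  have D_pos: "0 < n + 2 * (1 + (T - theta_min \<theta>))"
    using \<open>\<theta> $ i \<le> T\<close> theta_min_le_theta[of \<theta> i] by (simp add: n_def)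
  have "t * (n + 2 * (1 + (T - theta_min \<theta>))) < n"
    using small D_pos by (simp add: t_def n_def T_def theta_ave_def pos_less_divide_eq)
  moreover have "t * theta_min \<theta> \<le> t * t"
    using min_le_t t by (simp add: mult_left_mono)
  ultimately have "2 * t * (1 - t + T) < n * (1 - t)"
    by (simp add: algebra_simps)
  hence "2 * t * (1 - t + T) / (n * (1 - t)) < 1"
    using t by (simp add: n_def divide_less_eq)
  thus "\<rho> < 1"
    by (simp add: \<rho>_def n_def t_def T_def)
qed

lemma compact_prob_simplex: "compact (prob_simplex :: (real^'n) set)"
  unfolding compact_eq_bounded_closed
proof
  show "bounded (prob_simplex :: (real^'n) set)"
    unfolding bounded_iff
  proof (intro exI ballI)
    fix x :: "real^'n"
    assume "x \<in> prob_simplex"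
    thus "norm x \<le> 1"
      using norm_le_l1_cart[of x] by (simp add: prob_simplex_def)
  qed
  show "closed (prob_simplex :: (real^'n) set)"
    unfolding prob_simplex_def
    by (intro closed_Collect_conj closed_Collect_all closed_Collect_le closed_Collect_eq continuous_intros)
qed

lemma convex_prob_simplex: "convex prob_simplex"
  unfolding convex_def prob_simplex_def
  by (auto simp: sum.distrib sum_distrib_left[symmetric])

lemma prob_simplex_nonempty: "prob_simplex \<noteq> {}"
proof -
  have "(1 / real CARD('n)) *\<^sub>R ones \<in> (prob_simplex :: (real^'n) set)"
    by (simp add: prob_simplex_def ones_def)
  thus ?thesis
    by blast
qed

lemma l1_contraction_fixed_point:
  fixes F :: "real^'n \<Rightarrow> real^'n"
  assumes S: "compact S" "convex S" "S \<noteq> {}" and FS: "F \<in> S \<rightarrow> S"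
    and \<rho>: "0 \<le> \<rho>" "\<rho> < 1"
    and contraction: "\<And>x y. x \<in> S \<Longrightarrow> y \<in> S \<Longrightarrow> l1_norm (F x - F y) \<le> \<rho> * l1_norm (x - y)"
  shows "\<exists>xs. xs \<in> S \<and> F xs = xs \<and> (\<forall>y\<in>S. F y = y \<longrightarrow> y = xs)
           \<and> (\<forall>x0\<in>S. \<exists>c \<rho>. 0 \<le> c \<and> 0 \<le> \<rho> \<and> \<rho> < 1 \<and>
                (\<forall>s::nat. norm ((F ^^ s) x0 - xs) \<le> c * \<rho> ^ s))"
proof -
  have "(\<rho> * real CARD('n))-lipschitz_on S F"
  proof (rule lipschitz_onI)
    fix x y assume "x \<in> S" "y \<in> S"
    have "dist (F x) (F y) \<le> l1_norm (F x - F y)"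
      by (simp add: dist_norm norm_le_l1_norm)
    also have "\<dots> \<le> \<rho> * l1_norm (x - y)"
      using \<open>x \<in> S\<close> \<open>y \<in> S\<close> by (rule contraction)
    also have "\<dots> \<le> \<rho> * (real CARD('n) * dist x y)"
      using \<rho> by (simp add: dist_norm l1_norm_le_card_norm mult_left_mono)
    finally show "dist (F x) (F y) \<le> \<rho> * real CARD('n) * dist x y"
      by (simp add: mult.assoc)
  qed (use \<rho> in simp)
  then obtain xs where xs: "xs \<in> S" "F xs = xs"
    using brouwer[OF S lipschitz_on_continuous_on FS] by blast
  have unique: "y = xs" if "y \<in> S" "F y = y" for y
  proof -
    have "l1_norm (y - xs) \<le> \<rho> * l1_norm (y - xs)"
      using contraction[OF that(1) xs(1)] that(2) xs(2) by simp
    hence "l1_norm (y - xs) \<le> 0"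
      using \<rho> l1_norm_nonneg[of "y - xs"] by (simp add: mult_le_cancel_right1 mult_le_0_iff)
    hence "norm (y - xs) \<le> 0"
      using norm_le_l1_norm order_trans by blast
    thus "y = xs"
      by simp
  qed
  have iterate: "(F ^^ s) x0 \<in> S \<and> l1_norm ((F ^^ s) x0 - xs) \<le> \<rho> ^ s * l1_norm (x0 - xs)"
    if "x0 \<in> S" for x0 s
  proof (induction s)
    case 0
    thus ?case
      using that by simp
  next
    case (Suc s)
    have "l1_norm ((F ^^ Suc s) x0 - xs) = l1_norm (F ((F ^^ s) x0) - F xs)"
      using xs(2) by simp
    also have "\<dots> \<le> \<rho> * l1_norm ((F ^^ s) x0 - xs)"
      using Suc.IH xs(1) by (intro contraction) auto
    also have "\<dots> \<le> \<rho> * (\<rho> ^ s * l1_norm (x0 - xs))"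
      using Suc.IH \<rho> by (intro mult_left_mono) auto
    finally show ?case
      using Suc.IH FS by (auto simp: mult.assoc)
  qed
  have geometric: "norm ((F ^^ s) x0 - xs) \<le> l1_norm (x0 - xs) * \<rho> ^ s" if "x0 \<in> S" for x0 s
    using order_trans[OF norm_le_l1_norm iterate[OF that, THEN conjunct2]] by (simp add: mult.commute)
  show ?thesis
  proof (intro exI[of _ xs] conjI ballI impI)
    show "xs \<in> S" "F xs = xs"
      by (fact xs)+
    show "y = xs" if "y \<in> S" "F y = y" for y
      using that by (rule unique)
    show "\<exists>c \<rho>'. 0 \<le> c \<and> 0 \<le> \<rho>' \<and> \<rho>' < 1 \<and> (\<forall>s. norm ((F ^^ s) x0 - xs) \<le> c * \<rho>' ^ s)"
      if "x0 \<in> S" for x0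
      using \<rho> l1_norm_nonneg that
      by (intro exI[of _ "l1_norm (x0 - xs)"] exI[of _ \<rho>] conjI allI geometric) simp_all
  qed
qed

theorem theorem4:
  fixes C :: "real^'n^'n" and \<theta> :: "real^'n"
  assumes n2: "CARD('n) \<ge> 2"
    and C: "row_stochastic_zero_diag C"
    and th_lt1: "\<forall>i. 0 \<le> \<theta> $ i \<and> \<theta> $ i < 1"
    and th_pos: "\<exists>j. 0 < \<theta> $ j"
    and small: "theta_max \<theta> < real CARD('n) /
        (real CARD('n) + 2 * (1 + (real CARD('n) * theta_ave \<theta> - theta_min \<theta>)))"
  shows "\<exists>xs. xs \<in> prob_simplex \<and> Fmap C \<theta> xs = xs
           \<and> (\<forall>y\<in>prob_simplex. Fmap C \<theta> y = y \<longrightarrow> y = xs)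
           \<and> (\<forall>x0\<in>prob_simplex. \<exists>c \<rho>. 0 \<le> c \<and> 0 \<le> \<rho> \<and> \<rho> < 1 \<and>
                (\<forall>s::nat. norm ((Fmap C \<theta> ^^ s) x0 - xs) \<le> c * \<rho> ^ s))"
proof (rule l1_contraction_fixed_point[OF compact_prob_simplex convex_prob_simplex prob_simplex_nonempty
      _ theta_max_contraction_factor[OF th_lt1 small]])
  have row: "row_stochastic C"
    using C by (rule row_stochastic_zero_diag_imp_row_stochastic)
  show "Fmap C \<theta> \<in> prob_simplex \<rightarrow> prob_simplex"
    by (intro Pi_I Fmap_in_prob_simplex[OF row th_lt1])
  have "\<forall>i. \<theta> $ i \<le> theta_max \<theta>" "theta_max \<theta> < 1"
    using theta_le_theta_max theta_max_lt_1 th_lt1 by auto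
  thus "l1_norm (Fmap C \<theta> x - Fmap C \<theta> y)
      \<le> 2 * theta_max \<theta> * (1 - theta_max \<theta> + (\<Sum>j\<in>UNIV. \<theta> $ j))
        / (real CARD('n) * (1 - theta_max \<theta>)) * l1_norm (x - y)"
    if "x \<in> prob_simplex" "y \<in> prob_simplex" for x y
    using Fmap_l1_lipschitz[OF row th_lt1 _ _ that] by blast
qed

end
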